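(* Let $\rho$ be a linear pseudometric on a totally ordered set $A$ and let $\rho'$ be the associated Kantorovich pseudometric on probability measures on $A$. If $(Y_\mu,Y_\nu)$ is an ordered coupling of two probability measures $\mu,\nu$ on $A$, then $\mathbb{E}[\rho(Y_\mu,Y_\nu)]=\rho'(\mu,\nu)$. Moreover, $\rho'$ is linear for the stochastic order: if $\mu\le_{st}\nu\le_{st}\eta$ then $\rho'(\mu,\eta)=\rho'(\mu,\nu)+\rho'(\nu,\eta)$.
   Context: $A$ is a standard Borel space with a measurable total order, and $\rho$ is measurable (and such that the expectations considered are finite, e.g. $\rho$ bounded). A pseudometric $\rho$ on an ordered set is linear if $\rho(a,c)=\rho(a,b)+\rho(b,c)$ whenever $a\le b\le c$. The Kantorovich pseudometric is $\rho'(\mu,\nu)=\inf\mathbb{E}[\rho(X_\mu,X_\nu)]$ over all couplings $(X_\mu,X_\nu)$ of $\mu$ and $\nu$. A coupling $(X_\mu,X_\nu)$ is ordered if $\mathbb{P}(X_\mu\le X_\nu)=1$ or $\mathbb{P}(X_\nu\le X_\mu)=1$. $\mu\le_{st}\nu$ means there is a coupling with $X_\mu\le X_\nu$ a.s. *)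

theory Defs
  imports "HOL-Probability.Probability"
begin

text \<open>The ground set A is a type 'a carrying a Polish topology; its Borel sigma-algebra
  makes it a standard Borel space.  The total order is an explicit relation R on 'a
  (R = {(a,b). a \<le> b}).\<close>

definition pseudometric :: "('a \<Rightarrow> 'a \<Rightarrow> real) \<Rightarrow> bool" where
  "pseudometric \<rho> \<longleftrightarrow>
     (\<forall>x. \<rho> x x = 0) \<and> (\<forall>x y. 0 \<le> \<rho> x y) \<and> (\<forall>x y. \<rho> x y = \<rho> y x) \<and>
     (\<forall>x y z. \<rho> x z \<le> \<rho> x y + \<rho> y z)"

definition linear_pseudometric :: "('a \<times> 'a) set \<Rightarrow> ('a \<Rightarrow> 'a \<Rightarrow> real) \<Rightarrow> bool" where
  "linear_pseudometric R \<rho> \<longleftrightarrow> pseudometric \<rho> \<and>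
     (\<forall>a b c. (a, b) \<in> R \<longrightarrow> (b, c) \<in> R \<longrightarrow> \<rho> a c = \<rho> a b + \<rho> b c)"

definition prob_on :: "'a::topological_space measure \<Rightarrow> bool" where
  "prob_on \<mu> \<longleftrightarrow> prob_space \<mu> \<and> sets \<mu> = sets borel"

text \<open>A coupling of \<mu> and \<nu>, represented by the joint law of (X_\<mu>, X_\<nu>).\<close>
definition coupling :: "'a::topological_space measure \<Rightarrow> 'a measure \<Rightarrow> ('a \<times> 'a) measure \<Rightarrow> bool" where
  "coupling \<mu> \<nu> \<pi> \<longleftrightarrow> prob_space \<pi> \<and> sets \<pi> = sets (borel \<Otimes>\<^sub>M borel) \<and>
     distr \<pi> borel fst = \<mu> \<and> distr \<pi> borel snd = \<nu>"

definition ordered_coupling :: "('a \<times> 'a) set \<Rightarrow> 'a::topological_space measure \<Rightarrow> 'a measure \<Rightarrow> ('a \<times> 'a) measure \<Rightarrow> bool" where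
  "ordered_coupling R \<mu> \<nu> \<pi> \<longleftrightarrow> coupling \<mu> \<nu> \<pi> \<and>
     ((AE p in \<pi>. (fst p, snd p) \<in> R) \<or> (AE p in \<pi>. (snd p, fst p) \<in> R))"

definition stoch_le :: "('a \<times> 'a) set \<Rightarrow> 'a::topological_space measure \<Rightarrow> 'a measure \<Rightarrow> bool" where
  "stoch_le R \<mu> \<nu> \<longleftrightarrow> (\<exists>\<pi>. coupling \<mu> \<nu> \<pi> \<and> (AE p in \<pi>. (fst p, snd p) \<in> R))"

definition kantorovich :: "('a \<Rightarrow> 'a \<Rightarrow> real) \<Rightarrow> 'a::topological_space measure \<Rightarrow> 'a measure \<Rightarrow> real" where
  "kantorovich \<rho> \<mu> \<nu> = (INF \<pi> \<in> {\<pi>. coupling \<mu> \<nu> \<pi>}. \<integral>p. \<rho> (fst p) (snd p) \<partial>\<pi>)"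

end

theory Submission
  imports Defs
begin

(* Fix a base point z and let \<phi> be the signed \<rho>-distance from z.  Linearity of \<rho> makes \<phi>
   monotone with \<rho> a b = |\<phi> a - \<phi> b|, so every coupling of \<mu> and \<nu> costs at least
   |E\<^sub>\<nu> \<phi> - E\<^sub>\<mu> \<phi>| and an ordered coupling costs exactly that; hence this is \<rho>'(\<mu>, \<nu>).
   For \<mu> \<le>st \<nu> \<le>st \<eta> the value E\<^sub>\<eta> \<phi> - E\<^sub>\<mu> \<phi> is also attained for (\<mu>, \<eta>) up to any \<epsilon> > 0:
   glue the two monotone couplings by matching their \<nu>-coordinates only up to which interval of
   \<phi>-length \<epsilon> they fall in, which keeps the glued coupling monotone up to \<epsilon>. *)

definition order_potential :: "('a \<times> 'a) set \<Rightarrow> ('a \<Rightarrow> 'a \<Rightarrow> real) \<Rightarrow> 'a \<Rightarrow> 'a \<Rightarrow> real" where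
  "order_potential R \<rho> z a = (if (z, a) \<in> R then \<rho> z a else - \<rho> a z)"

lemma linear_orderD:
  assumes "linear_order R"
  shows linear_order_trans: "(a, b) \<in> R \<Longrightarrow> (b, c) \<in> R \<Longrightarrow> (a, c) \<in> R"
    and linear_order_total: "(a, b) \<in> R \<or> (b, a) \<in> R"
proof -
  show "(a, b) \<in> R \<Longrightarrow> (b, c) \<in> R \<Longrightarrow> (a, c) \<in> R"
    using assms unfolding order_on_defs by (metis transD)
  have "(a, a) \<in> R"
    using assms unfolding order_on_defs refl_on_def by blast
  then show "(a, b) \<in> R \<or> (b, a) \<in> R"
    using assms unfolding order_on_defs total_on_def by (metis UNIV_I)
qed

lemma linear_pseudometricD:
  assumes "linear_pseudometric R \<rho>"
  shows linear_pseudometric_nonneg: "0 \<le> \<rho> x y"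
    and linear_pseudometric_sym: "\<rho> x y = \<rho> y x"
    and linear_pseudometric_add: "(a, b) \<in> R \<Longrightarrow> (b, c) \<in> R \<Longrightarrow> \<rho> a c = \<rho> a b + \<rho> b c"
  using assms unfolding linear_pseudometric_def pseudometric_def by auto

context
  fixes R :: "('a \<times> 'a) set" and \<rho> :: "'a \<Rightarrow> 'a \<Rightarrow> real"
  assumes order: "linear_order R" and lin: "linear_pseudometric R \<rho>"
begin

lemma order_potential_diff:
  assumes ab: "(a, b) \<in> R"
  shows "order_potential R \<rho> z b - order_potential R \<rho> z a = \<rho> a b"
proof (cases "(z, a) \<in> R")
  case True
  then have "(z, b) \<in> R" using linear_order_trans[OF order _ ab] by blast
  then show ?thesis
    using True linear_pseudometric_add[OF lin True ab] by (simp add: order_potential_def)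
next
  case za: False
  then have az: "(a, z) \<in> R" using linear_order_total[OF order] by blast
  show ?thesis
  proof (cases "(z, b) \<in> R")
    case True
    then show ?thesis
      using za linear_pseudometric_add[OF lin az True] by (simp add: order_potential_def)
  next
    case False
    then have "(b, z) \<in> R" using linear_order_total[OF order] by blast
    then show ?thesis
      using za False linear_pseudometric_add[OF lin ab] by (simp add: order_potential_def)
  qed
qed

lemma order_potential_mono: "(a, b) \<in> R \<Longrightarrow> order_potential R \<rho> z a \<le> order_potential R \<rho> z b"
  by (metis order_potential_diff linear_pseudometric_nonneg[OF lin] diff_ge_0_iff_ge)

lemma AE_order_potential_mono:
  "AE x in M. (f x, g x) \<in> R \<Longrightarrow> AE x in M. order_potential R \<rho> z (f x) \<le> order_potential R \<rho> z (g x)"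
  by (erule eventually_mono) (rule order_potential_mono)

lemma linear_pseudometric_eq_abs_potential:
  "\<rho> a b = \<bar>order_potential R \<rho> z a - order_potential R \<rho> z b\<bar>"
proof (cases "(a, b) \<in> R")
  case True
  then show ?thesis
    using order_potential_diff[OF True, of z] linear_pseudometric_nonneg[OF lin, of a b] by simp
next
  case False
  then have "(b, a) \<in> R" using linear_order_total[OF order] by blast
  then show ?thesis
    using order_potential_diff[OF \<open>(b, a) \<in> R\<close>, of z] linear_pseudometric_nonneg[OF lin, of b a]
      linear_pseudometric_sym[OF lin, of a b] by simp
qed

end

lemma borel_measurable_order_potential:
  assumes "R \<in> sets (borel \<Otimes>\<^sub>M borel)"
    and "(\<lambda>p. \<rho> (fst p) (snd p)) \<in> borel_measurable (borel \<Otimes>\<^sub>M borel)"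
  shows "order_potential R \<rho> z \<in> borel_measurable borel"
proof -
  have "(\<lambda>a. \<rho> z a) \<in> borel_measurable borel" "(\<lambda>a. \<rho> a z) \<in> borel_measurable borel"
    using measurable_Pair2[OF assms(2), of z] measurable_Pair1[OF assms(2), of z] by simp_all
  moreover have "{a \<in> space borel. (z, a) \<in> R} \<in> sets borel"
    using measurable_sets[OF measurable_Pair1' assms(1), of z] by (simp add: vimage_def)
  ultimately show ?thesis
    unfolding order_potential_def by (intro measurable_If borel_measurable_uminus)
qed

lemma order_potential_bound: "(\<And>x y. \<bar>\<rho> x y\<bar> \<le> B) \<Longrightarrow> \<bar>order_potential R \<rho> z a\<bar> \<le> B"
  by (simp add: order_potential_def)

lemma coupling_sets: "coupling \<mu> \<nu> \<pi> \<Longrightarrow> sets \<pi> = sets (borel \<Otimes>\<^sub>M borel)"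
  by (simp add: coupling_def)

lemma coupling_prob_space: "coupling \<mu> \<nu> \<pi> \<Longrightarrow> prob_space \<pi>"
  by (simp add: coupling_def)

lemma coupling_pair_prob_space:
  "coupling \<mu> \<nu> \<pi>1 \<Longrightarrow> coupling \<mu>' \<nu>' \<pi>2 \<Longrightarrow> pair_prob_space \<pi>1 \<pi>2"
  by (intro pair_prob_space.intro pair_sigma_finite.intro prob_space_imp_sigma_finite coupling_prob_space)

lemma coupling_measurable_eq:
  "coupling \<mu> \<nu> \<pi> \<Longrightarrow> measurable \<pi> N = measurable (borel \<Otimes>\<^sub>M borel) N"
  by (rule measurable_cong_sets[OF coupling_sets refl])

lemma coupling_measurable_fst: "coupling \<mu> \<nu> \<pi> \<Longrightarrow> fst \<in> \<pi> \<rightarrow>\<^sub>M borel"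
  and coupling_measurable_snd: "coupling \<mu> \<nu> \<pi> \<Longrightarrow> snd \<in> \<pi> \<rightarrow>\<^sub>M borel"
  by (simp_all add: coupling_measurable_eq)

lemma coupling_marginal_fst: "coupling \<mu> \<nu> \<pi> \<Longrightarrow> distr \<pi> borel fst = \<mu>"
  and coupling_marginal_snd: "coupling \<mu> \<nu> \<pi> \<Longrightarrow> distr \<pi> borel snd = \<nu>"
  by (simp_all add: coupling_def)

lemma nn_integral_coupling_fst:
  assumes "coupling \<mu> \<nu> \<pi>" and "g \<in> borel_measurable borel"
  shows "(\<integral>\<^sup>+p. g (fst p) \<partial>\<pi>) = (\<integral>\<^sup>+x. g x \<partial>\<mu>)"
  by (subst coupling_marginal_fst[OF assms(1), symmetric])
    (simp add: nn_integral_distr[OF coupling_measurable_fst[OF assms(1)]] assms(2))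

lemma nn_integral_coupling_snd:
  assumes "coupling \<mu> \<nu> \<pi>" and "g \<in> borel_measurable borel"
  shows "(\<integral>\<^sup>+p. g (snd p) \<partial>\<pi>) = (\<integral>\<^sup>+x. g x \<partial>\<nu>)"
  by (subst coupling_marginal_snd[OF assms(1), symmetric])
    (simp add: nn_integral_distr[OF coupling_measurable_snd[OF assms(1)]] assms(2))

lemma AE_coupling_fst:
  assumes "coupling \<mu> \<nu> \<pi>" and "AE x in \<mu>. P x"
  shows "AE p in \<pi>. P (fst p)"
  using assms(2) unfolding coupling_marginal_fst[OF assms(1), symmetric]
  by (rule AE_distrD[OF coupling_measurable_fst[OF assms(1)]])

lemma AE_coupling_snd:
  assumes "coupling \<mu> \<nu> \<pi>" and "AE y in \<nu>. P y"
  shows "AE p in \<pi>. P (snd p)"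
  using assms(2) unfolding coupling_marginal_snd[OF assms(1), symmetric]
  by (rule AE_distrD[OF coupling_measurable_snd[OF assms(1)]])

lemma distr_density_pair_fst:
  assumes "sigma_finite_measure M2" and w: "w \<in> borel_measurable (M1 \<Otimes>\<^sub>M M2)"
    and norm: "AE x in M1. (\<integral>\<^sup>+y. w (x, y) \<partial>M2) = 1" and k: "k \<in> M1 \<rightarrow>\<^sub>M N"
  shows "distr (density (M1 \<Otimes>\<^sub>M M2) w) N (\<lambda>q. k (fst q)) = distr M1 N k"
proof (rule measure_eqI)
  interpret M2: sigma_finite_measure M2 by fact
  fix B assume "B \<in> sets (distr (density (M1 \<Otimes>\<^sub>M M2) w) N (\<lambda>q. k (fst q)))"
  then have B: "B \<in> sets N" by simp
  let ?A = "k -` B \<inter> space M1"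
  have A: "?A \<in> sets M1" using measurable_sets[OF k B] .
  have kfst: "(\<lambda>q. k (fst q)) \<in> density (M1 \<Otimes>\<^sub>M M2) w \<rightarrow>\<^sub>M N"
    using k by (simp add: measurable_compose[OF measurable_fst])
  have "(\<lambda>q. k (fst q)) -` B \<inter> space (density (M1 \<Otimes>\<^sub>M M2) w) = ?A \<times> space M2"
    by (auto simp: space_pair_measure)
  then have "emeasure (distr (density (M1 \<Otimes>\<^sub>M M2) w) N (\<lambda>q. k (fst q))) B
      = (\<integral>\<^sup>+q. w q * indicator (?A \<times> space M2) q \<partial>(M1 \<Otimes>\<^sub>M M2))"
    using emeasure_distr[OF kfst B] emeasure_density[OF w] A by simp
  also have "\<dots> = (\<integral>\<^sup>+x. indicator ?A x * (\<integral>\<^sup>+y. w (x, y) \<partial>M2) \<partial>M1)"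
  proof -
    have "(\<integral>\<^sup>+q. w q * indicator (?A \<times> space M2) q \<partial>(M1 \<Otimes>\<^sub>M M2))
        = (\<integral>\<^sup>+x. \<integral>\<^sup>+y. indicator ?A x * w (x, y) \<partial>M2 \<partial>M1)"
      using w A by (simp add: M2.nn_integral_fst[symmetric] indicator_times mult.commute
          mult.left_commute cong: nn_integral_cong)
    also have "\<dots> = (\<integral>\<^sup>+x. indicator ?A x * (\<integral>\<^sup>+y. w (x, y) \<partial>M2) \<partial>M1)"
      using w by (intro nn_integral_cong nn_integral_cmult measurable_Pair2)
    finally show ?thesis .
  qed
  also have "\<dots> = (\<integral>\<^sup>+x. indicator ?A x \<partial>M1)"
    by (rule nn_integral_cong_AE) (use norm in auto)
  also have "\<dots> = emeasure (distr M1 N k) B"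
    using A B k by (simp add: emeasure_distr)
  finally show "emeasure (distr (density (M1 \<Otimes>\<^sub>M M2) w) N (\<lambda>q. k (fst q))) B = emeasure (distr M1 N k) B" .
qed simp

lemma distr_density_pair_snd:
  assumes "pair_sigma_finite M1 M2" and w: "w \<in> borel_measurable (M1 \<Otimes>\<^sub>M M2)"
    and norm: "AE y in M2. (\<integral>\<^sup>+x. w (x, y) \<partial>M1) = 1" and k: "k \<in> M2 \<rightarrow>\<^sub>M N"
  shows "distr (density (M1 \<Otimes>\<^sub>M M2) w) N (\<lambda>q. k (snd q)) = distr M2 N k"
proof (rule measure_eqI)
  interpret pair_sigma_finite M1 M2 by fact
  fix B assume "B \<in> sets (distr (density (M1 \<Otimes>\<^sub>M M2) w) N (\<lambda>q. k (snd q)))"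
  then have B: "B \<in> sets N" by simp
  let ?A = "k -` B \<inter> space M2"
  have A: "?A \<in> sets M2" using measurable_sets[OF k B] .
  have ksnd: "(\<lambda>q. k (snd q)) \<in> density (M1 \<Otimes>\<^sub>M M2) w \<rightarrow>\<^sub>M N"
    using k by (simp add: measurable_compose[OF measurable_snd])
  have "(\<lambda>q. k (snd q)) -` B \<inter> space (density (M1 \<Otimes>\<^sub>M M2) w) = space M1 \<times> ?A"
    by (auto simp: space_pair_measure)
  then have "emeasure (distr (density (M1 \<Otimes>\<^sub>M M2) w) N (\<lambda>q. k (snd q))) B
      = (\<integral>\<^sup>+q. w q * indicator (space M1 \<times> ?A) q \<partial>(M1 \<Otimes>\<^sub>M M2))"
    using emeasure_distr[OF ksnd B] emeasure_density[OF w] A by simp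
  also have "\<dots> = (\<integral>\<^sup>+y. indicator ?A y * (\<integral>\<^sup>+x. w (x, y) \<partial>M1) \<partial>M2)"
  proof -
    have "(\<integral>\<^sup>+q. w q * indicator (space M1 \<times> ?A) q \<partial>(M1 \<Otimes>\<^sub>M M2))
        = (\<integral>\<^sup>+y. \<integral>\<^sup>+x. indicator ?A y * w (x, y) \<partial>M1 \<partial>M2)"
      using w A by (simp add: nn_integral_snd[symmetric] indicator_times mult.commute
          mult.left_commute cong: nn_integral_cong)
    also have "\<dots> = (\<integral>\<^sup>+y. indicator ?A y * (\<integral>\<^sup>+x. w (x, y) \<partial>M1) \<partial>M2)"
      using w by (intro nn_integral_cong nn_integral_cmult measurable_Pair1)
    finally show ?thesis .
  qed
  also have "\<dots> = (\<integral>\<^sup>+y. indicator ?A y \<partial>M2)"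
    by (rule nn_integral_cong_AE) (use norm in auto)
  also have "\<dots> = emeasure (distr M2 N k) B"
    using A B k by (simp add: emeasure_distr)
  finally show "emeasure (distr (density (M1 \<Otimes>\<^sub>M M2) w) N (\<lambda>q. k (snd q))) B = emeasure (distr M2 N k) B" .
qed simp

lemma coupling_distr_density_pair:
  assumes c1: "coupling \<mu> \<nu>1 \<pi>1" and c2: "coupling \<nu>2 \<eta> \<pi>2"
    and w: "w \<in> borel_measurable (\<pi>1 \<Otimes>\<^sub>M \<pi>2)"
    and norm1: "AE x in \<pi>1. (\<integral>\<^sup>+y. w (x, y) \<partial>\<pi>2) = 1"
    and norm2: "AE y in \<pi>2. (\<integral>\<^sup>+x. w (x, y) \<partial>\<pi>1) = 1"
  shows "coupling \<mu> \<eta> (distr (density (\<pi>1 \<Otimes>\<^sub>M \<pi>2) w) (borel \<Otimes>\<^sub>M borel) (\<lambda>q. (fst (fst q), snd (snd q))))"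
    (is "coupling \<mu> \<eta> (distr ?D _ ?g)")
proof -
  interpret pair_prob_space \<pi>1 \<pi>2
    by (rule coupling_pair_prob_space[OF c1 c2])
  have fst1: "fst \<in> \<pi>1 \<rightarrow>\<^sub>M borel" and snd2: "snd \<in> \<pi>2 \<rightarrow>\<^sub>M borel"
    using coupling_measurable_fst[OF c1] coupling_measurable_snd[OF c2] .
  have g: "?g \<in> ?D \<rightarrow>\<^sub>M borel \<Otimes>\<^sub>M borel"
    by (simp add: measurable_Pair measurable_compose[OF measurable_fst fst1]
        measurable_compose[OF measurable_snd snd2])
  have marginal1: "distr (distr ?D (borel \<Otimes>\<^sub>M borel) ?g) borel fst = \<mu>"
    using distr_density_pair_fst[OF M2.sigma_finite_measure_axioms w norm1 fst1]
    by (simp add: distr_distr[OF measurable_fst g] comp_def coupling_marginal_fst[OF c1])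
  have marginal2: "distr (distr ?D (borel \<Otimes>\<^sub>M borel) ?g) borel snd = \<eta>"
    using distr_density_pair_snd[OF pair_sigma_finite_axioms w norm2 snd2]
    by (simp add: distr_distr[OF measurable_snd g] comp_def coupling_marginal_snd[OF c2])
  have "prob_space (distr ?D (borel \<Otimes>\<^sub>M borel) ?g)"
    using M1.prob_space_distr[OF fst1] coupling_marginal_fst[OF c1] marginal1
    by (intro prob_space_distrD[of fst _ borel]) simp_all
  with marginal1 marginal2 show ?thesis
    by (simp add: coupling_def)
qed

lemma AE_pair_prob_space:
  assumes "pair_prob_space M1 M2" and "AE x in M1. P x" and "AE y in M2. Q y"
    and "Measurable.pred M1 P" and "Measurable.pred M2 Q"
  shows "AE q in M1 \<Otimes>\<^sub>M M2. P (fst q) \<and> Q (snd q)"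
proof -
  interpret pair_prob_space M1 M2 by fact
  show ?thesis
  proof (rule AE_pair_measure)
    have "{q \<in> space (M1 \<Otimes>\<^sub>M M2). P (fst q) \<and> Q (snd q)} = {x \<in> space M1. P x} \<times> {y \<in> space M2. Q y}"
      by (auto simp: space_pair_measure)
    also have "\<dots> \<in> sets (M1 \<Otimes>\<^sub>M M2)"
      using assms(4,5) by (intro pair_measureI) (simp_all add: pred_def)
    finally show "{q \<in> space (M1 \<Otimes>\<^sub>M M2). P (fst q) \<and> Q (snd q)} \<in> sets (M1 \<Otimes>\<^sub>M M2)" .
    show "AE x in M1. AE y in M2. P (fst (x, y)) \<and> Q (snd (x, y))"
      using assms(2) by eventually_elim (use assms(3) in auto)
  qed
qed

lemma AE_emeasure_fiber_nonzero:
  fixes g :: "'a \<Rightarrow> 'b::countable"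
  assumes g: "g \<in> M \<rightarrow>\<^sub>M count_space UNIV"
  shows "AE x in M. emeasure M {u \<in> space M. g u = g x} \<noteq> 0"
proof -
  have "AE x in M. g x = k \<longrightarrow> emeasure M {u \<in> space M. g u = k} \<noteq> 0" for k
  proof (cases "emeasure M {u \<in> space M. g u = k} = 0")
    case True
    have "{u \<in> space M. g u = k} \<in> null_sets M"
      using True g by (auto simp: null_sets_def)
    then show ?thesis by (rule AE_I') auto
  qed simp
  then have "AE x in M. \<forall>k\<in>UNIV. g x = k \<longrightarrow> emeasure M {u \<in> space M. g u = k} \<noteq> 0"
    by (subst AE_ball_countable) auto
  then show ?thesis by eventually_elim auto
qed

definition bin :: "real \<Rightarrow> ('a \<Rightarrow> real) \<Rightarrow> 'a \<Rightarrow> int" where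
  "bin e f x = \<lfloor>f x / e\<rfloor>"

(* Used as a density on a product of two couplings with common middle marginal \<nu>, it makes the
   two \<nu>-coordinates conditionally independent given their bin; matching them exactly would
   need a disintegration of \<nu>.  On a \<nu>-null bin the weight is 1 / 0 = \<infinity>, which is harmless. *)
definition bin_weight :: "real \<Rightarrow> ('a \<Rightarrow> real) \<Rightarrow> 'a measure \<Rightarrow> 'a \<Rightarrow> 'a \<Rightarrow> ennreal" where
  "bin_weight e f \<nu> x y =
     (if bin e f x = bin e f y then 1 / emeasure \<nu> {u \<in> space \<nu>. bin e f u = bin e f x} else 0)"

lemma measurable_bin:
  "f \<in> borel_measurable M \<Longrightarrow> bin e f \<in> M \<rightarrow>\<^sub>M count_space UNIV"
  unfolding bin_def
  by (rule measurable_compose[OF borel_measurable_divide[OF _ measurable_const] measurable_real_floor])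
    simp_all

lemma abs_diff_less_if_bin_eq:
  assumes "bin e f x = bin e f y" and "0 < e"
  shows "\<bar>f x - f y\<bar> < e"
proof -
  have "\<bar>f x / e - f y / e\<bar> < 1"
    using assms(1) unfolding bin_def by linarith
  then show ?thesis
    using assms(2) by (simp add: diff_divide_distrib[symmetric] abs_divide)
qed

lemma bin_weight_commute: "bin_weight e f \<nu> x y = bin_weight e f \<nu> y x"
  by (simp add: bin_weight_def)

lemma borel_measurable_bin_weight:
  assumes f: "f \<in> borel_measurable M"
  shows "(\<lambda>q. bin_weight e f \<nu> (fst q) (snd q)) \<in> borel_measurable (M \<Otimes>\<^sub>M M)"
proof -
  have bin_fst: "(\<lambda>q. bin e f (fst q)) \<in> M \<Otimes>\<^sub>M M \<rightarrow>\<^sub>M count_space UNIV"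
    and bin_snd: "(\<lambda>q. bin e f (snd q)) \<in> M \<Otimes>\<^sub>M M \<rightarrow>\<^sub>M count_space UNIV"
    by (auto intro: measurable_compose[OF _ measurable_bin[OF f]])
  have "{q \<in> space (M \<Otimes>\<^sub>M M). k = bin e f (snd q)} \<in> sets (M \<Otimes>\<^sub>M M)" for k
    using measurable_sets[OF bin_snd, of "{k}"] by (simp add: vimage_def Int_def conj_commute eq_commute)
  then have "(\<lambda>q. (\<lambda>k q. if k = bin e f (snd q) then 1 / emeasure \<nu> {u \<in> space \<nu>. bin e f u = k} else 0)
      (bin e f (fst q)) q) \<in> borel_measurable (M \<Otimes>\<^sub>M M)"
    by (intro measurable_compose_countable'[OF measurable_If bin_fst]) auto
  then show ?thesis by (simp add: bin_weight_def eq_commute)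
qed

lemma AE_nn_integral_bin_weight:
  assumes "finite_measure \<nu>" and f: "f \<in> borel_measurable \<nu>"
  shows "AE x in \<nu>. (\<integral>\<^sup>+y. bin_weight e f \<nu> x y \<partial>\<nu>) = 1"
  using AE_emeasure_fiber_nonzero[OF measurable_bin[OF f, of e]]
proof eventually_elim
  case (elim x)
  interpret finite_measure \<nu> by fact
  let ?B = "{u \<in> space \<nu>. bin e f u = bin e f x}"
  have B: "?B \<in> sets \<nu>"
    using measurable_sets[OF measurable_bin[OF f], of "{bin e f x}"]
    by (simp add: vimage_def Int_def conj_commute)
  have "(\<integral>\<^sup>+y. bin_weight e f \<nu> x y \<partial>\<nu>) = (\<integral>\<^sup>+y. (1 / emeasure \<nu> ?B) * indicator ?B y \<partial>\<nu>)"
    by (rule nn_integral_cong) (auto simp: bin_weight_def indicator_def)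
  also have "\<dots> = 1 / emeasure \<nu> ?B * emeasure \<nu> ?B"
    using B by (simp add: nn_integral_cmult_indicator)
  also have "\<dots> = 1"
    using elim by (simp add: ennreal_divide_times less_top[symmetric])
  finally show ?case .
qed

lemma coupling_bin_weight_normalized:
  fixes f :: "'a::topological_space \<Rightarrow> real"
  assumes c1: "coupling \<mu> \<nu> \<pi>1" and c2: "coupling \<nu> \<eta> \<pi>2" and f: "f \<in> borel_measurable borel"
  shows "AE x in \<pi>1. (\<integral>\<^sup>+y. bin_weight e f \<nu> (snd x) (fst y) \<partial>\<pi>2) = 1"
    and "AE y in \<pi>2. (\<integral>\<^sup>+x. bin_weight e f \<nu> (snd x) (fst y) \<partial>\<pi>1) = 1"
proof -
  interpret \<nu>: prob_space \<nu>
    using coupling_prob_space[OF c2] coupling_measurable_fst[OF c2] coupling_marginal_fst[OF c2]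
    by (metis prob_space.prob_space_distr)
  have "sets \<nu> = sets borel"
    using coupling_marginal_fst[OF c2] by auto
  then have "f \<in> borel_measurable \<nu>"
    using f by (subst measurable_cong_sets[of \<nu> borel]) simp_all
  then have norm: "AE y in \<nu>. (\<integral>\<^sup>+z. bin_weight e f \<nu> y z \<partial>\<nu>) = 1"
    by (rule AE_nn_integral_bin_weight[OF \<nu>.finite_measure_axioms])
  have bw: "bin_weight e f \<nu> y \<in> borel_measurable borel" for y
    using measurable_Pair2[OF borel_measurable_bin_weight[OF f], of y] by simp
  show "AE x in \<pi>1. (\<integral>\<^sup>+y. bin_weight e f \<nu> (snd x) (fst y) \<partial>\<pi>2) = 1"
    using AE_coupling_snd[OF c1 norm] by (simp add: nn_integral_coupling_fst[OF c2 bw])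
  have eq: "(\<integral>\<^sup>+x. bin_weight e f \<nu> (snd x) (fst y) \<partial>\<pi>1) = (\<integral>\<^sup>+z. bin_weight e f \<nu> (fst y) z \<partial>\<nu>)"
    for y
    using nn_integral_coupling_snd[OF c1 bw, of "fst y"]
    by (simp add: bin_weight_commute[of e f \<nu> _ "fst y"])
  show "AE y in \<pi>2. (\<integral>\<^sup>+x. bin_weight e f \<nu> (snd x) (fst y) \<partial>\<pi>1) = 1"
    using AE_coupling_fst[OF c2 norm] by eventually_elim (simp only: eq)
qed

lemma coupling_glue_approx:
  fixes \<mu> \<nu> \<eta> :: "'a::topological_space measure" and f :: "'a \<Rightarrow> real"
  assumes c1: "coupling \<mu> \<nu> \<pi>1" and c2: "coupling \<nu> \<eta> \<pi>2"
    and f: "f \<in> borel_measurable borel" and e: "0 < e"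
  obtains \<pi> where "coupling \<mu> \<eta> \<pi>"
    and "\<And>P. {p. P p} \<in> sets (borel \<Otimes>\<^sub>M borel) \<Longrightarrow>
      (AE q in \<pi>1 \<Otimes>\<^sub>M \<pi>2. \<bar>f (snd (fst q)) - f (fst (snd q))\<bar> < e \<longrightarrow> P (fst (fst q), snd (snd q))) \<Longrightarrow>
      AE p in \<pi>. P p"
proof -
  define w where "w q = bin_weight e f \<nu> (snd (fst q)) (fst (snd q))" for q :: "('a \<times> 'a) \<times> ('a \<times> 'a)"
  have w: "w \<in> borel_measurable (\<pi>1 \<Otimes>\<^sub>M \<pi>2)"
  proof -
    have "(\<lambda>q. (snd (fst q), fst (snd q))) \<in> \<pi>1 \<Otimes>\<^sub>M \<pi>2 \<rightarrow>\<^sub>M borel \<Otimes>\<^sub>M borel"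
      by (intro measurable_Pair measurable_compose[OF measurable_fst coupling_measurable_snd[OF c1]]
          measurable_compose[OF measurable_snd coupling_measurable_fst[OF c2]])
    from measurable_compose[OF this borel_measurable_bin_weight[OF f]] show ?thesis
      unfolding w_def by simp
  qed
  let ?g = "\<lambda>q. (fst (fst q), snd (snd q))"
  let ?D = "density (\<pi>1 \<Otimes>\<^sub>M \<pi>2) w"
  show thesis
  proof (rule that)
    show "coupling \<mu> \<eta> (distr ?D (borel \<Otimes>\<^sub>M borel) ?g)"
      using coupling_bin_weight_normalized[OF c1 c2 f]
      by (intro coupling_distr_density_pair[OF c1 c2 w]) (simp_all add: w_def)
    fix P assume P: "{p. P p} \<in> sets (borel \<Otimes>\<^sub>M borel)"
      and close: "AE q in \<pi>1 \<Otimes>\<^sub>M \<pi>2. \<bar>f (snd (fst q)) - f (fst (snd q))\<bar> < e \<longrightarrow> P (?g q)"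
    have g: "?g \<in> ?D \<rightarrow>\<^sub>M borel \<Otimes>\<^sub>M borel"
      by (simp add: measurable_Pair measurable_compose[OF measurable_fst coupling_measurable_fst[OF c1]]
          measurable_compose[OF measurable_snd coupling_measurable_snd[OF c2]])
    have "AE q in \<pi>1 \<Otimes>\<^sub>M \<pi>2. 0 < w q \<longrightarrow> P (?g q)"
      using close
    proof eventually_elim
      case (elim q)
      then show ?case
        using abs_diff_less_if_bin_eq[OF _ e, of f "snd (fst q)" "fst (snd q)"]
        by (auto simp: w_def bin_weight_def split: if_splits)
    qed
    then show "AE p in distr ?D (borel \<Otimes>\<^sub>M borel) ?g. P p"
      using P by (simp add: AE_distr_iff[OF g] AE_density[OF w] space_pair_measure)
  qed
qed

lemma kantorovich_eqI:
  assumes lower: "\<And>\<pi>. coupling \<mu> \<nu> \<pi> \<Longrightarrow> c \<le> (\<integral>p. \<rho> (fst p) (snd p) \<partial>\<pi>)"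
    and upper: "\<And>e. 0 < e \<Longrightarrow> \<exists>\<pi>. coupling \<mu> \<nu> \<pi> \<and> (\<integral>p. \<rho> (fst p) (snd p) \<partial>\<pi>) \<le> c + e"
  shows "kantorovich \<rho> \<mu> \<nu> = c"
proof (rule antisym)
  have bdd: "bdd_below ((\<lambda>\<pi>. \<integral>p. \<rho> (fst p) (snd p) \<partial>\<pi>) ` {\<pi>. coupling \<mu> \<nu> \<pi>})"
    using lower by (auto intro: bdd_belowI[where m = c])
  show "kantorovich \<rho> \<mu> \<nu> \<le> c"
  proof (rule field_le_epsilon)
    fix e :: real assume "0 < e"
    then obtain \<pi> where "coupling \<mu> \<nu> \<pi>" and "(\<integral>p. \<rho> (fst p) (snd p) \<partial>\<pi>) \<le> c + e"
      using upper by blast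
    then show "kantorovich \<rho> \<mu> \<nu> \<le> c + e"
      unfolding kantorovich_def using cINF_lower[OF bdd, of \<pi>] by simp
  qed
  have "{\<pi>. coupling \<mu> \<nu> \<pi>} \<noteq> {}"
    using upper[of 1] by auto
  then show "c \<le> kantorovich \<rho> \<mu> \<nu>"
    unfolding kantorovich_def by (rule cINF_greatest) (use lower in auto)
qed

context
  fixes \<phi> :: "'a::topological_space \<Rightarrow> real" and B :: real
  assumes \<phi>_measurable: "\<phi> \<in> borel_measurable borel" and \<phi>_bound: "\<And>x. \<bar>\<phi> x\<bar> \<le> B"
begin

lemma integrable_coupling_potential:
  assumes "coupling \<mu> \<nu> \<pi>"
  shows "integrable \<pi> (\<lambda>p. \<phi> (fst p))" and "integrable \<pi> (\<lambda>p. \<phi> (snd p))"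
proof -
  interpret prob_space \<pi> by (rule coupling_prob_space[OF assms])
  show "integrable \<pi> (\<lambda>p. \<phi> (fst p))" "integrable \<pi> (\<lambda>p. \<phi> (snd p))"
    using measurable_compose[OF coupling_measurable_fst[OF assms] \<phi>_measurable]
      measurable_compose[OF coupling_measurable_snd[OF assms] \<phi>_measurable] \<phi>_bound
    by (auto intro!: integrable_const_bound[where B = B])
qed

lemma integral_coupling_potential_diff:
  assumes "coupling \<mu> \<nu> \<pi>"
  shows "(\<integral>p. \<phi> (snd p) - \<phi> (fst p) \<partial>\<pi>) = (\<integral>x. \<phi> x \<partial>\<nu>) - (\<integral>x. \<phi> x \<partial>\<mu>)"
proof -
  have "(\<integral>x. \<phi> x \<partial>\<mu>) = (\<integral>p. \<phi> (fst p) \<partial>\<pi>)" "(\<integral>x. \<phi> x \<partial>\<nu>) = (\<integral>p. \<phi> (snd p) \<partial>\<pi>)"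
    using integral_distr[OF coupling_measurable_fst[OF assms], of \<phi>]
      integral_distr[OF coupling_measurable_snd[OF assms], of \<phi>] \<phi>_measurable
    by (simp_all add: coupling_marginal_fst[OF assms] coupling_marginal_snd[OF assms])
  then show ?thesis
    using integrable_coupling_potential[OF assms] by simp
qed

lemma expectation_diff_le_cost:
  assumes "coupling \<mu> \<nu> \<pi>"
  shows "\<bar>(\<integral>x. \<phi> x \<partial>\<nu>) - (\<integral>x. \<phi> x \<partial>\<mu>)\<bar> \<le> (\<integral>p. \<bar>\<phi> (fst p) - \<phi> (snd p)\<bar> \<partial>\<pi>)"
  using integral_norm_bound[of \<pi> "\<lambda>p. \<phi> (snd p) - \<phi> (fst p)"]
  by (simp add: integral_coupling_potential_diff[OF assms] abs_minus_commute)

lemma coupling_cost_eq_if_AE_le: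
  assumes "coupling \<mu> \<nu> \<pi>" and "AE p in \<pi>. \<phi> (fst p) \<le> \<phi> (snd p)"
  shows "(\<integral>p. \<bar>\<phi> (fst p) - \<phi> (snd p)\<bar> \<partial>\<pi>) = (\<integral>x. \<phi> x \<partial>\<nu>) - (\<integral>x. \<phi> x \<partial>\<mu>)"
proof -
  have "(\<integral>p. \<bar>\<phi> (fst p) - \<phi> (snd p)\<bar> \<partial>\<pi>) = (\<integral>p. \<phi> (snd p) - \<phi> (fst p) \<partial>\<pi>)"
    using assms(2) integrable_coupling_potential[OF assms(1)]
    by (intro integral_cong_AE) auto
  then show ?thesis
    by (simp add: integral_coupling_potential_diff[OF assms(1)])
qed

lemma coupling_cost_eq_if_AE_ge:
  assumes "coupling \<mu> \<nu> \<pi>" and "AE p in \<pi>. \<phi> (snd p) \<le> \<phi> (fst p)"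
  shows "(\<integral>p. \<bar>\<phi> (fst p) - \<phi> (snd p)\<bar> \<partial>\<pi>) = (\<integral>x. \<phi> x \<partial>\<mu>) - (\<integral>x. \<phi> x \<partial>\<nu>)"
proof -
  have "(\<integral>p. \<bar>\<phi> (fst p) - \<phi> (snd p)\<bar> \<partial>\<pi>) = - (\<integral>p. \<phi> (snd p) - \<phi> (fst p) \<partial>\<pi>)"
    unfolding integral_minus[symmetric] using assms(2) integrable_coupling_potential[OF assms(1)]
    by (intro integral_cong_AE) auto
  then show ?thesis
    by (simp add: integral_coupling_potential_diff[OF assms(1)])
qed

lemma kantorovich_potential_ordered:
  assumes c: "coupling \<mu> \<nu> \<pi>"
    and ordered: "(AE p in \<pi>. \<phi> (fst p) \<le> \<phi> (snd p)) \<or> (AE p in \<pi>. \<phi> (snd p) \<le> \<phi> (fst p))"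
  shows "kantorovich (\<lambda>x y. \<bar>\<phi> x - \<phi> y\<bar>) \<mu> \<nu> = (\<integral>p. \<bar>\<phi> (fst p) - \<phi> (snd p)\<bar> \<partial>\<pi>)"
proof (rule kantorovich_eqI)
  have "(\<integral>p. \<bar>\<phi> (fst p) - \<phi> (snd p)\<bar> \<partial>\<pi>) = \<bar>(\<integral>x. \<phi> x \<partial>\<nu>) - (\<integral>x. \<phi> x \<partial>\<mu>)\<bar>"
    using ordered coupling_cost_eq_if_AE_le[OF c] coupling_cost_eq_if_AE_ge[OF c]
      expectation_diff_le_cost[OF c] by auto
  then show "(\<integral>p. \<bar>\<phi> (fst p) - \<phi> (snd p)\<bar> \<partial>\<pi>) \<le> (\<integral>p. \<bar>\<phi> (fst p) - \<phi> (snd p)\<bar> \<partial>\<pi>')"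
    if "coupling \<mu> \<nu> \<pi>'" for \<pi>'
    using expectation_diff_le_cost[OF that] by simp
  show "\<exists>\<pi>'. coupling \<mu> \<nu> \<pi>' \<and>
      (\<integral>p. \<bar>\<phi> (fst p) - \<phi> (snd p)\<bar> \<partial>\<pi>') \<le> (\<integral>p. \<bar>\<phi> (fst p) - \<phi> (snd p)\<bar> \<partial>\<pi>) + e"
    if "0 < e" for e
    using c that by force
qed

lemma coupling_glue_cost_le:
  assumes c1: "coupling \<mu> \<nu> \<pi>1" and mono1: "AE p in \<pi>1. \<phi> (fst p) \<le> \<phi> (snd p)"
    and c2: "coupling \<nu> \<eta> \<pi>2" and mono2: "AE p in \<pi>2. \<phi> (fst p) \<le> \<phi> (snd p)"
    and e: "0 < e"
  obtains \<pi> where "coupling \<mu> \<eta> \<pi>"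
    and "(\<integral>p. \<bar>\<phi> (fst p) - \<phi> (snd p)\<bar> \<partial>\<pi>) \<le> (\<integral>x. \<phi> x \<partial>\<eta>) - (\<integral>x. \<phi> x \<partial>\<mu>) + e"
proof -
  let ?P = "\<lambda>p. \<bar>\<phi> (fst p) - \<phi> (snd p)\<bar> \<le> \<phi> (snd p) - \<phi> (fst p) + e"
  obtain \<pi> where c: "coupling \<mu> \<eta> \<pi>"
    and glued: "\<And>P. {p. P p} \<in> sets (borel \<Otimes>\<^sub>M borel) \<Longrightarrow>
      (AE q in \<pi>1 \<Otimes>\<^sub>M \<pi>2. \<bar>\<phi> (snd (fst q)) - \<phi> (fst (snd q))\<bar> < e / 2 \<longrightarrow> P (fst (fst q), snd (snd q))) \<Longrightarrow>
      AE p in \<pi>. P p"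
    by (rule coupling_glue_approx[OF c1 c2 \<phi>_measurable, of "e / 2"]) (use e in auto)
  have "pair_prob_space \<pi>1 \<pi>2"
    by (rule coupling_pair_prob_space[OF c1 c2])
  moreover have "Measurable.pred \<pi>1 (\<lambda>p. \<phi> (fst p) \<le> \<phi> (snd p))" "Measurable.pred \<pi>2 (\<lambda>p. \<phi> (fst p) \<le> \<phi> (snd p))"
    using c1 c2 \<phi>_measurable by (simp_all add: coupling_measurable_eq)
  ultimately have "AE q in \<pi>1 \<Otimes>\<^sub>M \<pi>2. \<phi> (fst (fst q)) \<le> \<phi> (snd (fst q)) \<and> \<phi> (fst (snd q)) \<le> \<phi> (snd (snd q))"
    by (rule AE_pair_prob_space[OF _ mono1 mono2])
  then have "AE q in \<pi>1 \<Otimes>\<^sub>M \<pi>2.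
      \<bar>\<phi> (snd (fst q)) - \<phi> (fst (snd q))\<bar> < e / 2 \<longrightarrow> ?P (fst (fst q), snd (snd q))"
    by eventually_elim (auto simp: abs_le_iff abs_less_iff split: abs_split)
  moreover have "{p. ?P p} \<in> sets (borel \<Otimes>\<^sub>M borel)"
  proof -
    have "{p \<in> space (borel \<Otimes>\<^sub>M borel). ?P p} \<in> sets (borel \<Otimes>\<^sub>M borel)"
      using \<phi>_measurable by measurable
    then show ?thesis by (simp add: space_pair_measure)
  qed
  ultimately have "AE p in \<pi>. ?P p"
    using glued by blast
  interpret prob_space \<pi> by (rule coupling_prob_space[OF c])
  have "(\<integral>p. \<bar>\<phi> (fst p) - \<phi> (snd p)\<bar> \<partial>\<pi>) \<le> (\<integral>p. \<phi> (snd p) - \<phi> (fst p) + e \<partial>\<pi>)"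
    using \<open>AE p in \<pi>. ?P p\<close> integrable_coupling_potential[OF c] by (intro integral_mono_AE) auto
  also have "\<dots> = (\<integral>x. \<phi> x \<partial>\<eta>) - (\<integral>x. \<phi> x \<partial>\<mu>) + e"
    using integrable_coupling_potential[OF c]
    by (simp add: integral_coupling_potential_diff[OF c, symmetric] prob_space)
  finally show thesis by (rule that[OF c])
qed

lemma kantorovich_potential_add:
  assumes c1: "coupling \<mu> \<nu> \<pi>1" and mono1: "AE p in \<pi>1. \<phi> (fst p) \<le> \<phi> (snd p)"
    and c2: "coupling \<nu> \<eta> \<pi>2" and mono2: "AE p in \<pi>2. \<phi> (fst p) \<le> \<phi> (snd p)"
  shows "kantorovich (\<lambda>x y. \<bar>\<phi> x - \<phi> y\<bar>) \<mu> \<eta> =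
    kantorovich (\<lambda>x y. \<bar>\<phi> x - \<phi> y\<bar>) \<mu> \<nu> + kantorovich (\<lambda>x y. \<bar>\<phi> x - \<phi> y\<bar>) \<nu> \<eta>"
proof -
  have "kantorovich (\<lambda>x y. \<bar>\<phi> x - \<phi> y\<bar>) \<mu> \<nu> = (\<integral>x. \<phi> x \<partial>\<nu>) - (\<integral>x. \<phi> x \<partial>\<mu>)"
    using kantorovich_potential_ordered[OF c1] coupling_cost_eq_if_AE_le[OF c1 mono1] mono1 by simp
  moreover have "kantorovich (\<lambda>x y. \<bar>\<phi> x - \<phi> y\<bar>) \<nu> \<eta> = (\<integral>x. \<phi> x \<partial>\<eta>) - (\<integral>x. \<phi> x \<partial>\<nu>)"
    using kantorovich_potential_ordered[OF c2] coupling_cost_eq_if_AE_le[OF c2 mono2] mono2 by simp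
  moreover have "kantorovich (\<lambda>x y. \<bar>\<phi> x - \<phi> y\<bar>) \<mu> \<eta> = (\<integral>x. \<phi> x \<partial>\<eta>) - (\<integral>x. \<phi> x \<partial>\<mu>)"
  proof (rule kantorovich_eqI)
    show "(\<integral>x. \<phi> x \<partial>\<eta>) - (\<integral>x. \<phi> x \<partial>\<mu>) \<le> (\<integral>p. \<bar>\<phi> (fst p) - \<phi> (snd p)\<bar> \<partial>\<pi>)"
      if "coupling \<mu> \<eta> \<pi>" for \<pi>
      using expectation_diff_le_cost[OF that] by linarith
    show "\<exists>\<pi>. coupling \<mu> \<eta> \<pi> \<and>
        (\<integral>p. \<bar>\<phi> (fst p) - \<phi> (snd p)\<bar> \<partial>\<pi>) \<le> (\<integral>x. \<phi> x \<partial>\<eta>) - (\<integral>x. \<phi> x \<partial>\<mu>) + e"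
      if "0 < e" for e
      using coupling_glue_cost_le[OF c1 mono1 c2 mono2 that] by blast
  qed
  ultimately show ?thesis by simp
qed

end

theorem lemma3p11:
  fixes R :: "('a::polish_space \<times> 'a) set" and \<rho> :: "'a \<Rightarrow> 'a \<Rightarrow> real"
  assumes "linear_order R"
    and "R \<in> sets (borel \<Otimes>\<^sub>M borel)"
    and "linear_pseudometric R \<rho>"
    and "(\<lambda>p. \<rho> (fst p) (snd p)) \<in> borel_measurable (borel \<Otimes>\<^sub>M borel)"
    and "\<exists>B. \<forall>x y. \<bar>\<rho> x y\<bar> \<le> B"
  shows "(\<forall>\<mu> \<nu> \<pi>. prob_on \<mu> \<longrightarrow> prob_on \<nu> \<longrightarrow> ordered_coupling R \<mu> \<nu> \<pi> \<longrightarrow>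
            (\<integral>p. \<rho> (fst p) (snd p) \<partial>\<pi>) = kantorovich \<rho> \<mu> \<nu>)
       \<and> (\<forall>\<mu> \<nu> \<eta>. prob_on \<mu> \<longrightarrow> prob_on \<nu> \<longrightarrow> prob_on \<eta> \<longrightarrow>
            stoch_le R \<mu> \<nu> \<longrightarrow> stoch_le R \<nu> \<eta> \<longrightarrow>
            kantorovich \<rho> \<mu> \<eta> = kantorovich \<rho> \<mu> \<nu> + kantorovich \<rho> \<nu> \<eta>)"
proof -
  obtain B where B: "\<And>x y. \<bar>\<rho> x y\<bar> \<le> B" using assms(5) by blast
  define \<phi> where "\<phi> = order_potential R \<rho> undefined"
  have \<rho>_eq: "\<rho> = (\<lambda>x y. \<bar>\<phi> x - \<phi> y\<bar>)"
    using linear_pseudometric_eq_abs_potential[OF assms(1,3)] by (auto simp: \<phi>_def)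
  have \<phi>: "\<phi> \<in> borel_measurable borel" "\<And>x. \<bar>\<phi> x\<bar> \<le> B"
    unfolding \<phi>_def by (rule borel_measurable_order_potential[OF assms(2,4)], rule order_potential_bound[OF B])
  note mono = AE_order_potential_mono[OF assms(1,3), of _ _ _ undefined, folded \<phi>_def]
  show ?thesis
    unfolding \<rho>_eq
  proof (intro conjI allI impI)
    fix \<mu> \<nu> \<pi> assume "ordered_coupling R \<mu> \<nu> \<pi>"
    then have "coupling \<mu> \<nu> \<pi>"
      and "(AE p in \<pi>. \<phi> (fst p) \<le> \<phi> (snd p)) \<or> (AE p in \<pi>. \<phi> (snd p) \<le> \<phi> (fst p))"
      unfolding ordered_coupling_def using mono by blast+
    then show "(\<integral>p. \<bar>\<phi> (fst p) - \<phi> (snd p)\<bar> \<partial>\<pi>) = kantorovich (\<lambda>x y. \<bar>\<phi> x - \<phi> y\<bar>) \<mu> \<nu>"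
      by (simp add: kantorovich_potential_ordered[OF \<phi>])
  next
    fix \<mu> \<nu> \<eta> :: "'a measure" assume "stoch_le R \<mu> \<nu>" "stoch_le R \<nu> \<eta>"
    then obtain \<pi>1 \<pi>2 where "coupling \<mu> \<nu> \<pi>1" "AE p in \<pi>1. (fst p, snd p) \<in> R"
      and "coupling \<nu> \<eta> \<pi>2" "AE p in \<pi>2. (fst p, snd p) \<in> R"
      unfolding stoch_le_def by blast
    then show "kantorovich (\<lambda>x y. \<bar>\<phi> x - \<phi> y\<bar>) \<mu> \<eta> =
        kantorovich (\<lambda>x y. \<bar>\<phi> x - \<phi> y\<bar>) \<mu> \<nu> + kantorovich (\<lambda>x y. \<bar>\<phi> x - \<phi> y\<bar>) \<nu> \<eta>"
      by (intro kantorovich_potential_add[OF \<phi>] mono)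
  qed
qed

end
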